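(* Let $\mathbf{L}\in\{\mathbf{K}_D,\mathbf{KD}_D,\mathbf{KT}_D\}$. For every formula $A$: $\mathsf{H}(\mathbf{L})\vdash A$ if and only if $\mathsf{G}(\mathbf{L})\vdash\;\Rightarrow A$.
   Context: Language: fix a finite nonempty set $\mathsf{Agt}$ of agents and a countable set $\mathsf{Prop}$ of propositional variables; $\mathsf{Grp}$ is the set of nonempty subsets of $\mathsf{Agt}$. Formulas: $\alpha::=p\mid\bot\mid\alpha\wedge\alpha\mid\alpha\vee\alpha\mid\alpha\rightarrow\alpha\mid\neg\alpha\mid D_G\alpha$ ($p\in\mathsf{Prop}$, $G\in\mathsf{Grp}$). Outmost-boxed formula: one of the form $D_G\gamma$. Hilbert systems: $\mathsf{H}(\mathbf{K}_D)$ has all instances of propositional tautologies, $D_G(\alpha\rightarrow\beta)\rightarrow(D_G\alpha\rightarrow D_G\beta)$, $D_G\alpha\rightarrow D_H\alpha$ for $G\subseteq H$, modus ponens, and necessitation (from $\alpha$ infer $D_G\alpha$). $\mathsf{H}(\mathbf{KD}_D)$ adds $\neg D_{\{a\}}\bot$ for each $a\in\mathsf{Agt}$; $\mathsf{H}(\mathbf{KT}_D)$ adds $D_G\alpha\rightarrow\alpha$. Sequent calculi (sequents $\Gamma\Rightarrow\Delta$ are pairs of finite multisets; derivable = root of a finite tree built from initial sequents by rules): $\mathsf{G}(\mathbf{K}_D)$ has initial sequents $\Gamma,p\Rightarrow p,\Delta$ and $\bot,\Gamma\Rightarrow\Delta$; rules $(R\wedge)$ from $\Gamma\Rightarrow\Delta,\alpha_1$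 and $\Gamma\Rightarrow\Delta,\alpha_2$ infer $\Gamma\Rightarrow\Delta,\alpha_1\wedge\alpha_2$; $(L\wedge)$ from $\alpha_1,\alpha_2,\Gamma\Rightarrow\Delta$ infer $\alpha_1\wedge\alpha_2,\Gamma\Rightarrow\Delta$; $(R\vee)$ from $\Gamma\Rightarrow\Delta,\alpha_1,\alpha_2$ infer $\Gamma\Rightarrow\Delta,\alpha_1\vee\alpha_2$; $(L\vee)$ from $\alpha_1,\Gamma\Rightarrow\Delta$ and $\alpha_2,\Gamma\Rightarrow\Delta$ infer $\alpha_1\vee\alpha_2,\Gamma\Rightarrow\Delta$; $(R\rightarrow)$ from $\alpha_1,\Gamma\Rightarrow\Delta,\alpha_2$ infer $\Gamma\Rightarrow\Delta,\alpha_1\rightarrow\alpha_2$; $(L\rightarrow)$ from $\Gamma\Rightarrow\Delta,\alpha_1$ and $\alpha_2,\Gamma\Rightarrow\Delta$ infer $\alpha_1\rightarrow\alpha_2,\Gamma\Rightarrow\Delta$; $(R\neg)$ from $\alpha,\Gamma\Rightarrow\Delta$ infer $\Gamma\Rightarrow\Delta,\neg\alpha$; $(L\neg)$ from $\Gamma\Rightarrow\Delta,\alpha$ infer $\neg\alpha,\Gamma\Rightarrow\Delta$; $(D_K)$: from $\alpha_1,\dots,\alpha_n\Rightarrow\beta$ ($n\ge0$) infer $\Sigma,D_{G_1}\alpha_1,\dots,D_{G_n}\alpha_n\Rightarrow D_G\beta,\Omega$ where all $G_i\subseteq G$, $\Sigma$ consists only of propositional variables, $\bot$, and $D_H\gamma$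 with $H\not\subseteq G$, and $\Omega$ only of propositional variables, $\bot$, outmost-boxed formulas. $\mathsf{G}(\mathbf{KD}_D)$ adds $(D_D)$: from $\Gamma\Rightarrow$ with $\Gamma\neq\emptyset$ infer $\Sigma,D_{\{a\}}\Gamma\Rightarrow\Omega$ ($D_{\{a\}}\Gamma=\{D_{\{a\}}\gamma:\gamma\in\Gamma\}$), $\Sigma$ only propositional variables, $\bot$, $D_H\gamma$ with $H\neq\{a\}$; $\Omega$ only propositional variables, $\bot$, outmost-boxed formulas. $\mathsf{G}(\mathbf{KT}_D)$ adds to $\mathsf{G}(\mathbf{K}_D)$ $(D_T)$: from $D_G\alpha,\alpha,\Gamma\Rightarrow\Delta$ infer $D_G\alpha,\Gamma\Rightarrow\Delta$. *)

theory Defs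
  imports "HOL-Library.Multiset" "HOL-Library.Countable"
begin

typedef 'a grp = "{G :: 'a set. G \<noteq> {}}" by auto

definition single_grp :: "'a \<Rightarrow> 'a grp" where
  "single_grp a = Abs_grp {a}"

datatype ('a, 'p) fm =
    Atom 'p
  | Bot
  | And "('a, 'p) fm" "('a, 'p) fm"
  | Or "('a, 'p) fm" "('a, 'p) fm"
  | Imp "('a, 'p) fm" "('a, 'p) fm"
  | Neg "('a, 'p) fm"
  | Box "'a grp" "('a, 'p) fm"

datatype logic = K_D | KD_D | KT_D

fun tv :: "(('a, 'p) fm \<Rightarrow> bool) \<Rightarrow> ('a, 'p) fm \<Rightarrow> bool" where
  "tv v (Atom p) = v (Atom p)"
| "tv v Bot = False"
| "tv v (And a b) = (tv v a \<and> tv v b)"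
| "tv v (Or a b) = (tv v a \<or> tv v b)"
| "tv v (Imp a b) = (tv v a \<longrightarrow> tv v b)"
| "tv v (Neg a) = (\<not> tv v a)"
| "tv v (Box G a) = v (Box G a)"

definition taut :: "('a, 'p) fm \<Rightarrow> bool" where
  "taut A = (\<forall>v. tv v A)"

inductive hil :: "logic \<Rightarrow> ('a, 'p) fm \<Rightarrow> bool" where
  H_taut: "taut A \<Longrightarrow> hil L A"
| H_K: "hil L (Imp (Box G (Imp a b)) (Imp (Box G a) (Box G b)))"
| H_mono: "Rep_grp G \<subseteq> Rep_grp H \<Longrightarrow> hil L (Imp (Box G a) (Box H a))"
| H_MP: "hil L (Imp a b) \<Longrightarrow> hil L a \<Longrightarrow> hil L b"
| H_Nec: "hil L a \<Longrightarrow> hil L (Box G a)"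
| H_D: "L = KD_D \<Longrightarrow> hil L (Neg (Box (single_grp ag) Bot))"
| H_T: "L = KT_D \<Longrightarrow> hil L (Imp (Box G a) a)"

fun omega_ok :: "('a, 'p) fm \<Rightarrow> bool" where
  "omega_ok (Atom p) = True"
| "omega_ok Bot = True"
| "omega_ok (Box H g) = True"
| "omega_ok _ = False"

fun sigmaK_ok :: "'a grp \<Rightarrow> ('a, 'p) fm \<Rightarrow> bool" where
  "sigmaK_ok G (Atom p) = True"
| "sigmaK_ok G Bot = True"
| "sigmaK_ok G (Box H g) = (\<not> Rep_grp H \<subseteq> Rep_grp G)"
| "sigmaK_ok G _ = False"

fun sigmaD_ok :: "'a \<Rightarrow> ('a, 'p) fm \<Rightarrow> bool" where
  "sigmaD_ok ag (Atom p) = True"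
| "sigmaD_ok ag Bot = True"
| "sigmaD_ok ag (Box H g) = (Rep_grp H \<noteq> {ag})"
| "sigmaD_ok ag _ = False"

inductive gc :: "logic \<Rightarrow> ('a, 'p) fm multiset \<Rightarrow> ('a, 'p) fm multiset \<Rightarrow> bool" where
  Ax: "gc L (add_mset (Atom p) \<Gamma>) (add_mset (Atom p) \<Delta>)"
| BotL: "gc L (add_mset Bot \<Gamma>) \<Delta>"
| AndR: "gc L \<Gamma> (add_mset a1 \<Delta>) \<Longrightarrow> gc L \<Gamma> (add_mset a2 \<Delta>) \<Longrightarrow> gc L \<Gamma> (add_mset (And a1 a2) \<Delta>)"
| AndL: "gc L (add_mset a1 (add_mset a2 \<Gamma>)) \<Delta> \<Longrightarrow> gc L (add_mset (And a1 a2) \<Gamma>) \<Delta>"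
| OrR: "gc L \<Gamma> (add_mset a1 (add_mset a2 \<Delta>)) \<Longrightarrow> gc L \<Gamma> (add_mset (Or a1 a2) \<Delta>)"
| OrL: "gc L (add_mset a1 \<Gamma>) \<Delta> \<Longrightarrow> gc L (add_mset a2 \<Gamma>) \<Delta> \<Longrightarrow> gc L (add_mset (Or a1 a2) \<Gamma>) \<Delta>"
| ImpR: "gc L (add_mset a1 \<Gamma>) (add_mset a2 \<Delta>) \<Longrightarrow> gc L \<Gamma> (add_mset (Imp a1 a2) \<Delta>)"
| ImpL: "gc L \<Gamma> (add_mset a1 \<Delta>) \<Longrightarrow> gc L (add_mset a2 \<Gamma>) \<Delta> \<Longrightarrow> gc L (add_mset (Imp a1 a2) \<Gamma>) \<Delta>"
| NegR: "gc L (add_mset a \<Gamma>) \<Delta> \<Longrightarrow> gc L \<Gamma> (add_mset (Neg a) \<Delta>)"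
| NegL: "gc L \<Gamma> (add_mset a \<Delta>) \<Longrightarrow> gc L (add_mset (Neg a) \<Gamma>) \<Delta>"
| DK: "gc L (mset (map snd gas)) {#b#} \<Longrightarrow>
       (\<forall>ga \<in> set gas. Rep_grp (fst ga) \<subseteq> Rep_grp G) \<Longrightarrow>
       (\<forall>x \<in># \<Sigma>. sigmaK_ok G x) \<Longrightarrow> (\<forall>x \<in># \<Omega>. omega_ok x) \<Longrightarrow>
       gc L (\<Sigma> + mset (map (\<lambda>ga. Box (fst ga) (snd ga)) gas)) (add_mset (Box G b) \<Omega>)"
| DD: "L = KD_D \<Longrightarrow> \<Gamma> \<noteq> {#} \<Longrightarrow> gc L \<Gamma> {#} \<Longrightarrow>
       (\<forall>x \<in># \<Sigma>. sigmaD_ok ag x) \<Longrightarrow> (\<forall>x \<in># \<Omega>. omega_ok x) \<Longrightarrow>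
       gc L (\<Sigma> + image_mset (Box (single_grp ag)) \<Gamma>) \<Omega>"
| DT: "L = KT_D \<Longrightarrow> gc L (add_mset (Box G a) (add_mset a \<Gamma>)) \<Delta> \<Longrightarrow>
       gc L (add_mset (Box G a) \<Gamma>) \<Delta>"

end

theory Submission
  imports Defs "HOL-Library.Product_Lexorder"
begin

text \<open>
  Soundness: a sequent \<open>\<Gamma> \<Rightarrow> \<Delta>\<close> is read as the formula \<open>\<And>\<Gamma> \<rightarrow> \<Or>\<Delta>\<close>, and every rule
  of G(L) becomes a tautological consequence of its premises and the axioms K, monotonicity, D
  and T of H(L).

  Completeness is semantic. All theorems of H(L) hold in the finite tree models of L, and
  backward proof search in G(L) either derives a sequent or builds a tree model refuting it.
  The propositional rules are semantically invertible. Once only atoms, \<open>\<bottom>\<close> and boxes are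
  left, the premises of all instances of \<open>(D\<^sub>K)\<close> and \<open>(D\<^sub>D)\<close> are searched recursively and
  their countermodels become the children of the root; for \<open>KT\<^sub>D\<close> the root is reflexive, so
  \<open>(D\<^sub>T)\<close> first adds the body of every box on the left. The search keeps the histories HL and
  HR of all formulas that occurred on either side of the current branch; each of them is
  either still in the sequent or was decomposed into formulas of the histories, so a truth
  lemma shows that the root satisfies HL and falsifies HR.
\<close>

section \<open>Soundness of the sequent calculi\<close>

definition and_list :: "('a, 'p) fm list \<Rightarrow> ('a, 'p) fm" where
  "and_list xs = foldr And xs (Neg Bot)"

definition or_list :: "('a, 'p) fm list \<Rightarrow> ('a, 'p) fm" where
  "or_list xs = foldr Or xs Bot"

definition list_of :: "'b multiset \<Rightarrow> 'b list" where
  "list_of M = (SOME xs. mset xs = M)"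

definition sequent_fm :: "('a, 'p) fm multiset \<Rightarrow> ('a, 'p) fm multiset \<Rightarrow> ('a, 'p) fm" where
  "sequent_fm G D = Imp (and_list (list_of G)) (or_list (list_of D))"

lemma mset_list_of [simp]: "mset (list_of M) = M"
  unfolding list_of_def by (rule someI_ex[OF ex_mset])

lemma set_list_of [simp]: "set (list_of M) = set_mset M"
  by (metis mset_list_of set_mset_mset)

lemma tv_and_list [simp]: "tv v (and_list xs) \<longleftrightarrow> (\<forall>x\<in>set xs. tv v x)"
  unfolding and_list_def by (induction xs) auto

lemma tv_or_list [simp]: "tv v (or_list xs) \<longleftrightarrow> (\<exists>x\<in>set xs. tv v x)"
  unfolding or_list_def by (induction xs) auto

lemma tv_sequent_fm [simp]:
  "tv v (sequent_fm G D) \<longleftrightarrow> ((\<forall>x\<in>#G. tv v x) \<longrightarrow> (\<exists>x\<in>#D. tv v x))"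
  unfolding sequent_fm_def by simp

lemma hil_taut_consequence:
  assumes "\<forall>A\<in>set As. hil L A" and "\<And>v. \<forall>A\<in>set As. tv v A \<Longrightarrow> tv v B"
  shows "hil L B"
  using assms
proof (induction As arbitrary: B)
  case Nil
  then show ?case by (simp add: H_taut taut_def)
next
  case (Cons A As)
  then have "hil L (Imp A B)" by simp
  moreover have "hil L A" using Cons.prems(1) by simp
  ultimately show ?case by (rule H_MP)
qed

lemma hil_taut_consequence1: "hil L A \<Longrightarrow> (\<And>v. tv v A \<Longrightarrow> tv v B) \<Longrightarrow> hil L B"
  by (rule hil_taut_consequence[of "[A]"]) auto

lemma hil_taut_consequence2:
  "hil L A \<Longrightarrow> hil L A' \<Longrightarrow> (\<And>v. tv v A \<Longrightarrow> tv v A' \<Longrightarrow> tv v B) \<Longrightarrow> hil L B"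
  by (rule hil_taut_consequence[of "[A, A']"]) auto

lemma hil_box_mono_lift:
  assumes "hil L (Imp (and_list (map snd gas)) b)"
    and "\<forall>ga\<in>set gas. Rep_grp (fst ga) \<subseteq> Rep_grp G"
  shows "hil L (Imp (and_list (map (\<lambda>ga. Box (fst ga) (snd ga)) gas)) (Box G b))"
  using assms
proof (induction gas arbitrary: b)
  case Nil
  then have "hil L (Box G b)"
    by (intro H_Nec) (auto elim: hil_taut_consequence1 simp: and_list_def)
  then show ?case by (rule hil_taut_consequence1) simp
next
  case (Cons ga gas)
  have "hil L (Imp (and_list (map snd gas)) (Imp (snd ga) b))"
    using Cons.prems(1) by (rule hil_taut_consequence1) (simp add: and_list_def)
  then have IH:
    "hil L (Imp (and_list (map (\<lambda>ga. Box (fst ga) (snd ga)) gas)) (Box G (Imp (snd ga) b)))"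
    using Cons.prems(2) by (intro Cons.IH) auto
  have mono: "hil L (Imp (Box (fst ga) (snd ga)) (Box G (snd ga)))"
    using Cons.prems(2) by (intro H_mono) simp
  have "hil L (Imp (and_list (map (\<lambda>ga. Box (fst ga) (snd ga)) gas))
      (Imp (Box G (snd ga)) (Box G b)))"
    using IH H_K by (rule hil_taut_consequence2) auto
  then show ?case
    using mono by (rule hil_taut_consequence2) (auto simp: and_list_def)
qed

lemma hil_sequent_fm_if_gc: "gc L G D \<Longrightarrow> hil L (sequent_fm G D)"
proof (induction rule: gc.induct)
  case Ax
  show ?case by (rule hil_taut_consequence[of "[]"]) auto
next
  case BotL
  show ?case by (rule hil_taut_consequence[of "[]"]) auto
next
  case AndR
  from AndR.IH show ?case by (rule hil_taut_consequence2) auto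
next
  case AndL
  from AndL.IH show ?case by (rule hil_taut_consequence1) auto
next
  case OrR
  from OrR.IH show ?case by (rule hil_taut_consequence1) auto
next
  case OrL
  from OrL.IH show ?case by (rule hil_taut_consequence2) auto
next
  case ImpR
  from ImpR.IH show ?case by (rule hil_taut_consequence1) auto
next
  case ImpL
  from ImpL.IH show ?case by (rule hil_taut_consequence2) auto
next
  case NegR
  from NegR.IH show ?case by (rule hil_taut_consequence1) auto
next
  case NegL
  from NegL.IH show ?case by (rule hil_taut_consequence1) auto
next
  case (DK L gas b G \<Sigma> \<Omega>)
  have "hil L (Imp (and_list (map snd gas)) b)"
    using DK.IH by (rule hil_taut_consequence1) auto
  then have "hil L (Imp (and_list (map (\<lambda>ga. Box (fst ga) (snd ga)) gas)) (Box G b))"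
    using DK.hyps(2) by (rule hil_box_mono_lift)
  then show ?case by (rule hil_taut_consequence1) force
next
  case (DD L \<Gamma> \<Sigma> ag \<Omega>)
  let ?gas = "map (Pair (single_grp ag)) (list_of \<Gamma>)"
  have "hil L (Imp (and_list (map snd ?gas)) Bot)"
    using DD.IH by (rule hil_taut_consequence1) (auto simp: comp_def)
  then have
    "hil L (Imp (and_list (map (\<lambda>ga. Box (fst ga) (snd ga)) ?gas)) (Box (single_grp ag) Bot))"
    by (rule hil_box_mono_lift) simp
  then show ?case using H_D[OF DD.hyps(1), of ag]
    by (rule hil_taut_consequence2) force
next
  case (DT L G a \<Gamma> \<Delta>)
  from DT.IH H_T[OF DT.hyps(1), of G a] show ?case
    by (rule hil_taut_consequence2) auto
qed


section \<open>Tree models\<close>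

text \<open>
  A tree is a Kripke model: a child labelled K is a successor for every agent in K, and
  \<open>self_loop\<close> makes a node its own successor for every agent. So \<open>D\<^sub>H a\<close> holds iff
  \<open>a\<close> holds along the intersection of the relations of the agents in H.
\<close>

datatype ('a, 'p) tree =
  Node (atoms: "'p set") (self_loop: bool) (children: "('a grp \<times> ('a, 'p) tree) list")

primrec holds :: "('a, 'p) tree \<Rightarrow> ('a, 'p) fm \<Rightarrow> bool" where
  "holds t (Atom p) \<longleftrightarrow> p \<in> atoms t"
| "holds t Bot \<longleftrightarrow> False"
| "holds t (And a b) \<longleftrightarrow> holds t a \<and> holds t b"
| "holds t (Or a b) \<longleftrightarrow> holds t a \<or> holds t b"
| "holds t (Imp a b) \<longleftrightarrow> (holds t a \<longrightarrow> holds t b)"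
| "holds t (Neg a) \<longleftrightarrow> \<not> holds t a"
| "holds t (Box H a) \<longleftrightarrow> (self_loop t \<longrightarrow> holds t a) \<and>
     (\<forall>k\<in>set (children t). Rep_grp H \<subseteq> Rep_grp (fst k) \<longrightarrow> holds (snd k) a)"

inductive is_model :: "logic \<Rightarrow> ('a, 'p) tree \<Rightarrow> bool" for L :: logic where
  "(\<forall>k\<in>set cs. is_model L (snd k)) \<Longrightarrow>
   (L = KD_D \<longrightarrow> loop \<or> (\<forall>ag. \<exists>k\<in>set cs. ag \<in> Rep_grp (fst k))) \<Longrightarrow>
   (L = KT_D \<longrightarrow> loop) \<Longrightarrow> is_model L (Node V loop cs)"

lemma Rep_single_grp [simp]: "Rep_grp (single_grp ag) = {ag}"
  by (simp add: single_grp_def Abs_grp_inverse)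

lemma Rep_grp_eq_singleton_iff: "Rep_grp H = {ag} \<longleftrightarrow> H = single_grp ag"
  by (metis Rep_grp_inject Rep_single_grp)

lemma Rep_grp_subset_singleton_iff: "Rep_grp H \<subseteq> {ag} \<longleftrightarrow> H = single_grp ag"
  using Rep_grp[of H] by (auto simp: subset_singleton_iff Rep_grp_eq_singleton_iff)

lemma tv_holds: "tv (holds t) A \<longleftrightarrow> holds t A"
  by (induction A) auto

lemma is_model_child: "is_model L t \<Longrightarrow> k \<in> set (children t) \<Longrightarrow> is_model L (snd k)"
  by (auto elim: is_model.cases)

lemma is_model_Node_leaf: "is_model L (Node V True [])"
  by (rule is_model.intros) auto

lemma hil_sound: "hil L A \<Longrightarrow> is_model L t \<Longrightarrow> holds t A"
proof (induction arbitrary: t rule: hil.induct)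
  case (H_taut A L)
  then show ?case by (simp add: taut_def flip: tv_holds)
next
  case (H_Nec L a G)
  then show ?case by (auto dest: is_model_child)
next
  case (H_D L ag)
  then show ?case by (auto elim!: is_model.cases)
next
  case (H_T L G a)
  then show ?case by (auto elim!: is_model.cases)
qed auto


section \<open>Backward proof search\<close>

definition refutable :: "logic \<Rightarrow> ('a, 'p) fm set \<Rightarrow> ('a, 'p) fm set \<Rightarrow> bool" where
  "refutable L HL HR \<longleftrightarrow> (\<exists>t. is_model L t \<and> (\<forall>A\<in>HL. holds t A) \<and> (\<forall>A\<in>HR. \<not> holds t A))"

lemma refutable_mono: "refutable L HL' HR' \<Longrightarrow> HL \<subseteq> HL' \<Longrightarrow> HR \<subseteq> HR' \<Longrightarrow> refutable L HL HR"
  unfolding refutable_def by blast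

lemma refutable_empty: "refutable L {} {}"
  unfolding refutable_def using is_model_Node_leaf by blast

definition refuting_tree :: "logic \<Rightarrow> ('a, 'p) fm set \<Rightarrow> ('a, 'p) fm set \<Rightarrow> ('a, 'p) tree" where
  "refuting_tree L HL HR = (SOME t. is_model L t \<and> (\<forall>A\<in>HL. holds t A) \<and> (\<forall>A\<in>HR. \<not> holds t A))"

lemma refuting_tree:
  assumes "refutable L HL HR"
  shows "is_model L (refuting_tree L HL HR)" and "\<forall>A\<in>HL. holds (refuting_tree L HL HR) A"
    and "\<forall>A\<in>HR. \<not> holds (refuting_tree L HL HR) A"
  using someI_ex[OF assms[unfolded refutable_def]] unfolding refuting_tree_def by blast+

text \<open>
  Each pair \<open>(NL, NR)\<close> is one premise of the left (right) rule for the principal formula: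
  \<open>NL\<close> is added to the antecedent and \<open>NR\<close> to the succedent.
\<close>

fun left_premises :: "('a, 'p) fm \<Rightarrow> (('a, 'p) fm multiset \<times> ('a, 'p) fm multiset) list" where
  "left_premises (And a b) = [({#a, b#}, {#})]"
| "left_premises (Or a b) = [({#a#}, {#}), ({#b#}, {#})]"
| "left_premises (Imp a b) = [({#}, {#a#}), ({#b#}, {#})]"
| "left_premises (Neg a) = [({#}, {#a#})]"
| "left_premises _ = []"

fun right_premises :: "('a, 'p) fm \<Rightarrow> (('a, 'p) fm multiset \<times> ('a, 'p) fm multiset) list" where
  "right_premises (And a b) = [({#}, {#a#}), ({#}, {#b#})]"
| "right_premises (Or a b) = [({#}, {#a, b#})]"
| "right_premises (Imp a b) = [({#a#}, {#b#})]"
| "right_premises (Neg a) = [({#a#}, {#})]"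
| "right_premises _ = []"

lemma left_premises_eq_Nil_iff: "left_premises x = [] \<longleftrightarrow> omega_ok x"
  by (cases x) auto

lemma right_premises_eq_Nil_iff: "right_premises x = [] \<longleftrightarrow> omega_ok x"
  by (cases x) auto

lemma gc_left_rule:
  assumes "left_premises x \<noteq> []" and "\<forall>P\<in>set (left_premises x). gc L (fst P + G) (snd P + D)"
  shows "gc L (add_mset x G) D"
  using assms by (cases x) (auto intro: gc.intros simp: add_mset_commute)

lemma gc_right_rule:
  assumes "right_premises x \<noteq> []" and "\<forall>P\<in>set (right_premises x). gc L (fst P + G) (snd P + D)"
  shows "gc L G (add_mset x D)"
  using assms by (cases x) (auto intro: gc.intros simp: add_mset_commute)

lemma holds_iff_left_premise:
  "left_premises x \<noteq> [] \<Longrightarrow>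
   holds t x \<longleftrightarrow> (\<exists>P\<in>set (left_premises x). (\<forall>y\<in>#fst P. holds t y) \<and> (\<forall>y\<in>#snd P. \<not> holds t y))"
  by (cases x) auto

lemma not_holds_iff_right_premise:
  "right_premises x \<noteq> [] \<Longrightarrow>
   \<not> holds t x \<longleftrightarrow> (\<exists>P\<in>set (right_premises x). (\<forall>y\<in>#fst P. holds t y) \<and> (\<forall>y\<in>#snd P. \<not> holds t y))"
  by (cases x) auto

primrec subformulas :: "('a, 'p) fm \<Rightarrow> ('a, 'p) fm set" where
  "subformulas (Atom p) = {Atom p}"
| "subformulas Bot = {Bot}"
| "subformulas (And a b) = insert (And a b) (subformulas a \<union> subformulas b)"
| "subformulas (Or a b) = insert (Or a b) (subformulas a \<union> subformulas b)"
| "subformulas (Imp a b) = insert (Imp a b) (subformulas a \<union> subformulas b)"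
| "subformulas (Neg a) = insert (Neg a) (subformulas a)"
| "subformulas (Box H a) = insert (Box H a) (subformulas a)"

lemma finite_subformulas [simp]: "finite (subformulas x)"
  by (induction x) auto

lemma subformulas_refl [simp]: "x \<in> subformulas x"
  by (cases x) auto

lemma subformulas_trans: "y \<in> subformulas x \<Longrightarrow> subformulas y \<subseteq> subformulas x"
  by (induction x) auto

lemma size_le_if_subformula: "y \<in> subformulas x \<Longrightarrow> size y \<le> size x"
  by (induction x) auto

lemma subformulas_UN_closed: "y \<in> \<Union> (subformulas ` S) \<Longrightarrow> subformulas y \<subseteq> \<Union> (subformulas ` S)"
  using subformulas_trans by blast

lemma left_premises_subformulas:
  "P \<in> set (left_premises x) \<Longrightarrow> y \<in># fst P + snd P \<Longrightarrow> y \<in> subformulas x \<and> size y < size x"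
  by (cases x) auto

lemma left_premises_size_less:
  "P \<in> set (left_premises x) \<Longrightarrow> (\<Sum>y\<in>#fst P + snd P. size y) < size x"
  by (cases x) auto

lemma right_premises_subformulas:
  "P \<in> set (right_premises x) \<Longrightarrow> y \<in># fst P + snd P \<Longrightarrow> y \<in> subformulas x \<and> size y < size x"
  by (cases x) auto

lemma right_premises_size_less:
  "P \<in> set (right_premises x) \<Longrightarrow> (\<Sum>y\<in>#fst P + snd P. size y) < size x"
  by (cases x) auto


definition decomposed_in ::
  "(('a, 'p) fm multiset \<times> ('a, 'p) fm multiset) list \<Rightarrow> ('a, 'p) fm set \<Rightarrow> ('a, 'p) fm set \<Rightarrow>
   bool" where
  "decomposed_in Ps HL HR \<longleftrightarrow> (\<exists>P\<in>set Ps. set_mset (fst P) \<subseteq> HL \<and> set_mset (snd P) \<subseteq> HR)"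

lemma decomposed_inI:
  "P \<in> set Ps \<Longrightarrow> set_mset (fst P) \<subseteq> HL \<Longrightarrow> set_mset (snd P) \<subseteq> HR \<Longrightarrow> decomposed_in Ps HL HR"
  unfolding decomposed_in_def by blast

lemma decomposed_in_mono: "decomposed_in Ps HL HR \<Longrightarrow> HL \<subseteq> HL' \<Longrightarrow> HR \<subseteq> HR' \<Longrightarrow> decomposed_in Ps HL' HR'"
  unfolding decomposed_in_def by blast

definition saturated_history ::
  "('a, 'p) fm set \<Rightarrow> ('a, 'p) fm set \<Rightarrow> ('a, 'p) fm multiset \<Rightarrow> ('a, 'p) fm multiset \<Rightarrow> bool" where
  "saturated_history HL HR G D \<longleftrightarrow> set_mset G \<subseteq> HL \<and> set_mset D \<subseteq> HR \<and>
     (\<forall>x\<in>HL. x \<in># G \<or> decomposed_in (left_premises x) HL HR) \<and>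
     (\<forall>x\<in>HR. x \<in># D \<or> decomposed_in (right_premises x) HL HR)"

lemma saturated_history_set_mset: "saturated_history (set_mset G) (set_mset D) G D"
  by (simp add: saturated_history_def)

lemma saturated_history_left_step:
  assumes "saturated_history HL HR (add_mset x G) D" and "P \<in> set (left_premises x)"
  shows "saturated_history (HL \<union> set_mset (fst P)) (HR \<union> set_mset (snd P)) (fst P + G) (snd P + D)"
proof -
  have "decomposed_in (left_premises x) (HL \<union> set_mset (fst P)) (HR \<union> set_mset (snd P))"
    using assms(2) by (rule decomposed_inI) auto
  moreover have "decomposed_in Ps HL HR \<Longrightarrow>
      decomposed_in Ps (HL \<union> set_mset (fst P)) (HR \<union> set_mset (snd P))" for Ps
    by (rule decomposed_in_mono) auto
  ultimately show ?thesis
    using assms(1) unfolding saturated_history_def by auto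
qed

lemma saturated_history_right_step:
  assumes "saturated_history HL HR G (add_mset x D)" and "P \<in> set (right_premises x)"
  shows "saturated_history (HL \<union> set_mset (fst P)) (HR \<union> set_mset (snd P)) (fst P + G) (snd P + D)"
proof -
  have "decomposed_in (right_premises x) (HL \<union> set_mset (fst P)) (HR \<union> set_mset (snd P))"
    using assms(2) by (rule decomposed_inI) auto
  moreover have "decomposed_in Ps HL HR \<Longrightarrow>
      decomposed_in Ps (HL \<union> set_mset (fst P)) (HR \<union> set_mset (snd P))" for Ps
    by (rule decomposed_in_mono) auto
  ultimately show ?thesis
    using assms(1) unfolding saturated_history_def by auto
qed

lemma saturated_history_insert:
  assumes "saturated_history HL HR G D"
  shows "saturated_history (insert a HL) HR (add_mset a G) D"
proof -
  have "decomposed_in Ps HL HR \<Longrightarrow> decomposed_in Ps (insert a HL) HR" for Ps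
    by (rule decomposed_in_mono) auto
  then show ?thesis
    using assms unfolding saturated_history_def by auto
qed

lemma saturated_history_truth:
  assumes hist: "saturated_history HL HR G D"
    and G: "\<And>x. x \<in># G \<Longrightarrow> (\<And>y. y \<in> HL \<Longrightarrow> size y < size x \<Longrightarrow> holds t y) \<Longrightarrow> holds t x"
    and D: "\<And>x. x \<in># D \<Longrightarrow> \<not> holds t x"
  shows "(x \<in> HL \<longrightarrow> holds t x) \<and> (x \<in> HR \<longrightarrow> \<not> holds t x)"
proof (induction x rule: measure_induct_rule[of size])
  case (less x)
  have "holds t x" if x: "x \<in> HL"
  proof (cases "x \<in># G")
    case True
    then show ?thesis
      by (rule G) (use less.IH in blast)
  next
    case False
    then obtain P where P: "P \<in> set (left_premises x)"
      and P_hist: "set_mset (fst P) \<subseteq> HL" "set_mset (snd P) \<subseteq> HR"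
      using hist x unfolding saturated_history_def decomposed_in_def by blast
    have "\<forall>y\<in>#fst P. holds t y" "\<forall>y\<in>#snd P. \<not> holds t y"
      using less.IH left_premises_subformulas[OF P] P_hist by auto
    moreover have "left_premises x \<noteq> []"
      using P by auto
    ultimately show ?thesis
      using P holds_iff_left_premise by blast
  qed
  moreover have "\<not> holds t x" if x: "x \<in> HR"
  proof (cases "x \<in># D")
    case True
    then show ?thesis by (rule D)
  next
    case False
    then obtain P where P: "P \<in> set (right_premises x)"
      and P_hist: "set_mset (fst P) \<subseteq> HL" "set_mset (snd P) \<subseteq> HR"
      using hist x unfolding saturated_history_def decomposed_in_def by blast
    have "\<forall>y\<in>#fst P. holds t y" "\<forall>y\<in>#snd P. \<not> holds t y"
      using less.IH right_premises_subformulas[OF P] P_hist by auto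
    moreover have "right_premises x \<noteq> []"
      using P by auto
    ultimately show ?thesis
      using P not_holds_iff_right_premise by blast
  qed
  ultimately show ?case by blast
qed

text \<open>
  Lexicographic termination measure of the search: the first component drops when the search
  passes to the premise of a modal rule, the second at a \<open>(D\<^sub>T)\<close> step (which enlarges the
  sequent), the third at a propositional step.
\<close>

definition rank ::
  "('a, 'p) fm set \<Rightarrow> ('a, 'p) fm set \<Rightarrow> ('a, 'p) fm multiset \<Rightarrow> ('a, 'p) fm multiset \<Rightarrow>
   nat \<times> nat \<times> nat" where
  "rank HL HR G D =
     (let U = \<Union> (subformulas ` (HL \<union> HR)) in (Max (size ` U), card (U - HL), \<Sum>x\<in>#G + D. size x))"

lemma rank_less_extend:
  assumes "finite HL" "finite HR" and new: "NL \<union> NR \<subseteq> \<Union> (subformulas ` (HL \<union> HR))"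
    and "\<not> NL \<subseteq> HL \<or> (\<Sum>x\<in>#G' + D'. size x) < (\<Sum>x\<in>#G + D. size x)"
  shows "rank (HL \<union> NL) (HR \<union> NR) G' D' < rank HL HR G D"
proof -
  define U where "U = \<Union> (subformulas ` (HL \<union> HR))"
  have "subformulas y \<subseteq> U" if "y \<in> NL \<union> NR" for y
    using that new subformulas_UN_closed unfolding U_def by (meson subsetD)
  then have closed: "\<Union> (subformulas ` (HL \<union> NL \<union> (HR \<union> NR))) = U"
    unfolding U_def by auto
  have fin: "finite U"
    unfolding U_def using assms(1,2) by simp
  have card_le: "card (U - (HL \<union> NL)) \<le> card (U - HL)"
    using fin by (intro card_mono) auto
  have card_less: "card (U - (HL \<union> NL)) < card (U - HL)" if "\<not> NL \<subseteq> HL"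
  proof (rule psubset_card_mono)
    show "finite (U - HL)"
      using fin by simp
    show "U - (HL \<union> NL) \<subset> U - HL"
      using that new unfolding U_def by blast
  qed
  have "(card (U - (HL \<union> NL)), \<Sum>x\<in>#G' + D'. size x) < (card (U - HL), \<Sum>x\<in>#G + D. size x)"
    using assms(4) card_le card_less by auto
  then show ?thesis
    unfolding rank_def Let_def closed U_def[symmetric] by simp
qed

lemma rank_less_restart:
  assumes "finite HL" "finite HR" "finite (HL' \<union> HR')" "HL' \<union> HR' \<noteq> {}"
    and bodies: "\<forall>y\<in>HL' \<union> HR'. \<exists>K. Box K y \<in> HL \<union> HR"
  shows "rank HL' HR' G' D' < rank HL HR G D"
proof -
  define U where "U = \<Union> (subformulas ` (HL \<union> HR))"
  define U' where "U' = \<Union> (subformulas ` (HL' \<union> HR'))"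
  have "size z < Max (size ` U)" if z: "z \<in> U'" for z
  proof -
    obtain y K where "y \<in> HL' \<union> HR'" "z \<in> subformulas y" and box: "Box K y \<in> HL \<union> HR"
      using z bodies unfolding U'_def by blast
    then have "size z < size (Box K y)"
      by (auto dest: size_le_if_subformula)
    also have "size (Box K y) \<le> Max (size ` U)"
    proof (rule Max_ge)
      show "finite (size ` U)"
        unfolding U_def using assms(1,2) by simp
      show "size (Box K y) \<in> size ` U"
        unfolding U_def using box subformulas_refl by blast
    qed
    finally show ?thesis .
  qed
  moreover have "finite U'"
    unfolding U'_def using assms(3) by simp
  moreover have "U' \<noteq> {}"
    unfolding U'_def using assms(4) subformulas_refl by blast
  ultimately have "Max (size ` U') < Max (size ` U)"
    by simp
  then show ?thesis
    unfolding rank_def U_def[symmetric] U'_def[symmetric] Let_def by simp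
qed


text \<open>
  \<open>unboxes (\<lambda>H. Rep_grp H \<subseteq> Rep_grp K) G\<close> is the antecedent of the \<open>(D\<^sub>K)\<close> premise for a
  succedent \<open>D\<^sub>K b\<close>, and \<open>unboxes ((=) (single_grp ag)) G\<close> the antecedent of the \<open>(D\<^sub>D)\<close>
  premise for agent \<open>ag\<close>.
\<close>

fun unbox_if :: "('a grp \<Rightarrow> bool) \<Rightarrow> ('a, 'p) fm \<Rightarrow> ('a, 'p) fm multiset" where
  "unbox_if P (Box H a) = (if P H then {#a#} else {#})"
| "unbox_if P _ = {#}"

definition unboxes :: "('a grp \<Rightarrow> bool) \<Rightarrow> ('a, 'p) fm multiset \<Rightarrow> ('a, 'p) fm multiset" where
  "unboxes P G = (\<Sum>x\<in>#G. unbox_if P x)"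

lemma in_unboxes_iff: "a \<in># unboxes P G \<longleftrightarrow> (\<exists>H. Box H a \<in># G \<and> P H)"
proof (induction G)
  case (add x G)
  then show ?case by (cases x) (auto simp: unboxes_def)
qed (simp add: unboxes_def)

lemma split_boxes:
  "\<exists>\<Sigma> gas. G = \<Sigma> + mset (map (\<lambda>ga. Box (fst ga) (snd ga)) gas) \<and>
     mset (map snd gas) = unboxes P G \<and> (\<forall>ga\<in>set gas. P (fst ga)) \<and> (\<forall>x\<in>#\<Sigma>. unbox_if P x = {#})"
proof (induction G)
  case empty
  show ?case by (auto simp: unboxes_def)
next
  case (add x G)
  then obtain \<Sigma> gas where IH: "G = \<Sigma> + mset (map (\<lambda>ga. Box (fst ga) (snd ga)) gas)"
    "mset (map snd gas) = unboxes P G" "\<forall>ga\<in>set gas. P (fst ga)" "\<forall>x\<in>#\<Sigma>. unbox_if P x = {#}"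
    by blast
  show ?case
  proof (cases "unbox_if P x = {#}")
    case True
    with IH show ?thesis
      by (intro exI[of _ "add_mset x \<Sigma>"] exI[of _ gas]) (auto simp: unboxes_def)
  next
    case False
    then obtain H a where "x = Box H a" "P H"
      by (cases x) (auto split: if_splits)
    with IH show ?thesis
      by (intro exI[of _ \<Sigma>] exI[of _ "(H, a) # gas"]) (auto simp: unboxes_def)
  qed
qed

lemma gc_DK_unboxes:
  assumes "\<forall>x\<in>#G. omega_ok x" and "Box K b \<in># D" and "\<forall>x\<in>#D. omega_ok x"
    and "gc L (unboxes (\<lambda>H. Rep_grp H \<subseteq> Rep_grp K) G) {#b#}"
  shows "gc L G D"
proof -
  obtain \<Sigma> gas where G: "G = \<Sigma> + mset (map (\<lambda>ga. Box (fst ga) (snd ga)) gas)"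
    and prem: "mset (map snd gas) = unboxes (\<lambda>H. Rep_grp H \<subseteq> Rep_grp K) G"
    and grps: "\<forall>ga\<in>set gas. Rep_grp (fst ga) \<subseteq> Rep_grp K"
    and rest: "\<forall>x\<in>#\<Sigma>. unbox_if (\<lambda>H. Rep_grp H \<subseteq> Rep_grp K) x = {#}"
    using split_boxes by blast
  have "\<forall>x\<in>#\<Sigma>. sigmaK_ok K x"
  proof
    fix x assume "x \<in># \<Sigma>"
    with assms(1) rest have "omega_ok x" "unbox_if (\<lambda>H. Rep_grp H \<subseteq> Rep_grp K) x = {#}"
      unfolding G by auto
    then show "sigmaK_ok K x" by (cases x) (auto split: if_splits)
  qed
  moreover have "\<forall>x\<in>#D - {#Box K b#}. omega_ok x"
    using assms(3) by (auto dest: in_diffD)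
  moreover have "gc L (mset (map snd gas)) {#b#}"
    using assms(4) prem by simp
  ultimately have
    "gc L (\<Sigma> + mset (map (\<lambda>ga. Box (fst ga) (snd ga)) gas)) (add_mset (Box K b) (D - {#Box K b#}))"
    using grps by (intro DK)
  with assms(2) show ?thesis
    unfolding G by simp
qed

lemma gc_DD_unboxes:
  assumes "L = KD_D" and "\<forall>x\<in>#G. omega_ok x" and "\<forall>x\<in>#D. omega_ok x"
    and "unboxes ((=) (single_grp ag)) G \<noteq> {#}" and "gc L (unboxes ((=) (single_grp ag)) G) {#}"
  shows "gc L G D"
proof -
  obtain \<Sigma> gas where G: "G = \<Sigma> + mset (map (\<lambda>ga. Box (fst ga) (snd ga)) gas)"
    and prem: "mset (map snd gas) = unboxes ((=) (single_grp ag)) G"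
    and grps: "\<forall>ga\<in>set gas. single_grp ag = fst ga"
    and rest: "\<forall>x\<in>#\<Sigma>. unbox_if ((=) (single_grp ag)) x = {#}"
    using split_boxes by blast
  have "\<forall>x\<in>#\<Sigma>. sigmaD_ok ag x"
  proof
    fix x assume "x \<in># \<Sigma>"
    with assms(2) rest have "omega_ok x" "unbox_if ((=) (single_grp ag)) x = {#}"
      unfolding G by auto
    then show "sigmaD_ok ag x"
      by (cases x) (auto simp: Rep_grp_eq_singleton_iff split: if_splits)
  qed
  moreover have
    "mset (map (\<lambda>ga. Box (fst ga) (snd ga)) gas) = image_mset (Box (single_grp ag)) (mset (map snd gas))"
    using grps by (induction gas) auto
  moreover have "gc L (mset (map snd gas)) {#}" "mset (map snd gas) \<noteq> {#}"
    using assms(4,5) prem by simp_all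
  ultimately show ?thesis
    using assms(1,3) unfolding G by (auto intro: DD)
qed


lemma finite_boxes: "finite {(K, b). Box K b \<in># D}"
proof -
  have "{(K, b). Box K b \<in># D} = case_prod Box -` set_mset D"
    by auto
  moreover have "inj (case_prod Box)"
    by (auto simp: inj_def)
  ultimately show ?thesis
    using finite_vimageI[OF finite_set_mset] by metis
qed

lemma children_refuting_boxes:
  assumes K_refutable: "\<And>K b. Box K b \<in># D \<Longrightarrow>
      refutable L (set_mset (unboxes (\<lambda>H. Rep_grp H \<subseteq> Rep_grp K) G)) {b}"
  obtains cs where "\<forall>k\<in>set cs. is_model L (snd k)"
    and "\<And>K b. Box K b \<in># D \<Longrightarrow> \<exists>c. (K, c) \<in> set cs \<and> \<not> holds c b"
    and "\<And>H a k. Box H a \<in># G \<Longrightarrow> k \<in> set cs \<Longrightarrow> Rep_grp H \<subseteq> Rep_grp (fst k) \<Longrightarrow>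
      holds (snd k) a"
proof -
  define child where
    "child K b = refuting_tree L (set_mset (unboxes (\<lambda>H. Rep_grp H \<subseteq> Rep_grp K) G)) {b}" for K b
  have child: "is_model L (child K b)"
      "\<forall>a\<in>#unboxes (\<lambda>H. Rep_grp H \<subseteq> Rep_grp K) G. holds (child K b) a" "\<not> holds (child K b) b"
    if "Box K b \<in># D" for K b
    using refuting_tree[OF K_refutable[OF that]] unfolding child_def by simp_all
  obtain ds where ds: "set ds = {(K, b). Box K b \<in># D}"
    using finite_list[OF finite_boxes] by blast
  show thesis
  proof (rule that[of "map (\<lambda>(K, b). (K, child K b)) ds"])
    show "\<forall>k\<in>set (map (\<lambda>(K, b). (K, child K b)) ds). is_model L (snd k)"
      using child(1) ds by auto
    show "\<exists>c. (K, c) \<in> set (map (\<lambda>(K, b). (K, child K b)) ds) \<and> \<not> holds c b"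
      if "Box K b \<in># D" for K b
    proof (intro exI conjI)
      show "(K, child K b) \<in> set (map (\<lambda>(K, b). (K, child K b)) ds)"
        using that ds by (auto intro: image_eqI[where x = "(K, b)"])
      show "\<not> holds (child K b) b"
        using that by (rule child(3))
    qed
    show "holds (snd k) a" if box: "Box H a \<in># G"
      and k: "k \<in> set (map (\<lambda>(K, b). (K, child K b)) ds)" and sub: "Rep_grp H \<subseteq> Rep_grp (fst k)"
      for H a k
    proof -
      obtain K b where Kb: "Box K b \<in># D" "k = (K, child K b)"
        using k ds by auto
      moreover have "a \<in># unboxes (\<lambda>H. Rep_grp H \<subseteq> Rep_grp K) G"
        using box sub Kb(2) by (auto simp: in_unboxes_iff)
      ultimately show ?thesis
        using child(2) by simp
    qed
  qed
qed

lemma children_serial: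
  fixes G :: "('a::finite, 'p) fm multiset"
  assumes D_refutable: "\<And>ag. unboxes ((=) (single_grp ag)) G \<noteq> {#} \<Longrightarrow>
      refutable L (set_mset (unboxes ((=) (single_grp ag)) G)) {}"
  obtains cs where "\<forall>k\<in>set cs. is_model L (snd k)"
    and "\<forall>ag. \<exists>k\<in>set cs. ag \<in> Rep_grp (fst k)"
    and "\<And>H a k. Box H a \<in># G \<Longrightarrow> k \<in> set cs \<Longrightarrow> Rep_grp H \<subseteq> Rep_grp (fst k) \<Longrightarrow>
      holds (snd k) a"
proof -
  define child where
    "child ag = refuting_tree L (set_mset (unboxes ((=) (single_grp ag)) G)) {}" for ag
  have refutable_child: "refutable L (set_mset (unboxes ((=) (single_grp ag)) G)) {}" for ag
    using D_refutable refutable_empty by (cases "unboxes ((=) (single_grp ag)) G = {#}") auto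
  have child: "is_model L (child ag)" "\<forall>a\<in>#unboxes ((=) (single_grp ag)) G. holds (child ag) a"
    for ag
    using refuting_tree[OF refutable_child] unfolding child_def by simp_all
  obtain ags where ags: "set ags = (UNIV :: 'a set)"
    using finite_list[OF finite_UNIV] by blast
  show thesis
  proof (rule that[of "map (\<lambda>ag. (single_grp ag, child ag)) ags"])
    show "\<forall>k\<in>set (map (\<lambda>ag. (single_grp ag, child ag)) ags). is_model L (snd k)"
      using child(1) by auto
    show "\<forall>ag. \<exists>k\<in>set (map (\<lambda>ag. (single_grp ag, child ag)) ags). ag \<in> Rep_grp (fst k)"
      using ags by auto
    show "holds (snd k) a" if "Box H a \<in># G" and "k \<in> set (map (\<lambda>ag. (single_grp ag, child ag)) ags)"
      and "Rep_grp H \<subseteq> Rep_grp (fst k)" for H a k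
      using that child(2) by (auto simp: in_unboxes_iff Rep_grp_subset_singleton_iff)
  qed
qed

lemma children_for_modal_sequent:
  fixes G :: "('a::finite, 'p) fm multiset"
  assumes K_refutable: "\<And>K b. Box K b \<in># D \<Longrightarrow>
      refutable L (set_mset (unboxes (\<lambda>H. Rep_grp H \<subseteq> Rep_grp K) G)) {b}"
    and D_refutable: "\<And>ag. L = KD_D \<Longrightarrow> unboxes ((=) (single_grp ag)) G \<noteq> {#} \<Longrightarrow>
      refutable L (set_mset (unboxes ((=) (single_grp ag)) G)) {}"
  obtains cs where "\<forall>k\<in>set cs. is_model L (snd k)"
    and "L = KD_D \<Longrightarrow> \<forall>ag. \<exists>k\<in>set cs. ag \<in> Rep_grp (fst k)"
    and "\<And>K b. Box K b \<in># D \<Longrightarrow> \<exists>c. (K, c) \<in> set cs \<and> \<not> holds c b"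
    and "\<And>H a k. Box H a \<in># G \<Longrightarrow> k \<in> set cs \<Longrightarrow> Rep_grp H \<subseteq> Rep_grp (fst k) \<Longrightarrow>
      holds (snd k) a"
proof -
  obtain cs_K where K: "\<forall>k\<in>set cs_K. is_model L (snd k)"
    "\<And>K b. Box K b \<in># D \<Longrightarrow> \<exists>c. (K, c) \<in> set cs_K \<and> \<not> holds c b"
    "\<And>H a k. Box H a \<in># G \<Longrightarrow> k \<in> set cs_K \<Longrightarrow> Rep_grp H \<subseteq> Rep_grp (fst k) \<Longrightarrow> holds (snd k) a"
    using children_refuting_boxes[OF K_refutable] by blast
  obtain cs_D where D: "\<forall>k\<in>set cs_D. is_model L (snd k)"
    "L = KD_D \<Longrightarrow> \<forall>ag. \<exists>k\<in>set cs_D. ag \<in> Rep_grp (fst k)"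
    "\<And>H a k. Box H a \<in># G \<Longrightarrow> k \<in> set cs_D \<Longrightarrow> Rep_grp H \<subseteq> Rep_grp (fst k) \<Longrightarrow> holds (snd k) a"
  proof (cases "L = KD_D")
    case True
    obtain cs where "\<forall>k\<in>set cs. is_model L (snd k)" "\<forall>ag. \<exists>k\<in>set cs. ag \<in> Rep_grp (fst k)"
      "\<And>H a k. Box H a \<in># G \<Longrightarrow> k \<in> set cs \<Longrightarrow> Rep_grp H \<subseteq> Rep_grp (fst k) \<Longrightarrow> holds (snd k) a"
      using children_serial[OF D_refutable[OF True]] by blast
    then show ?thesis
      by (intro that[of cs]) auto
  next
    case False
    then show ?thesis
      by (intro that[of "[]"]) auto
  qed
  show thesis
  proof (rule that[of "cs_K @ cs_D"])
    show "\<exists>c. (K, c) \<in> set (cs_K @ cs_D) \<and> \<not> holds c b" if "Box K b \<in># D" for K b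
      using K(2)[OF that] by auto
  qed (use K D in auto)
qed

lemma refutable_modal_sequent:
  fixes G :: "('a::finite, 'p) fm multiset"
  assumes hist: "saturated_history HL HR G D"
    and omega: "\<forall>x\<in>#G. omega_ok x" "\<forall>x\<in>#D. omega_ok x"
    and no_Bot: "Bot \<notin># G" and no_axiom: "\<And>p. Atom p \<in># G \<Longrightarrow> Atom p \<notin># D"
    and T_saturated: "\<And>H a. L = KT_D \<Longrightarrow> Box H a \<in># G \<Longrightarrow> a \<in> HL"
    and K_refutable: "\<And>K b. Box K b \<in># D \<Longrightarrow>
      refutable L (set_mset (unboxes (\<lambda>H. Rep_grp H \<subseteq> Rep_grp K) G)) {b}"
    and D_refutable: "\<And>ag. L = KD_D \<Longrightarrow> unboxes ((=) (single_grp ag)) G \<noteq> {#} \<Longrightarrow>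
      refutable L (set_mset (unboxes ((=) (single_grp ag)) G)) {}"
  shows "refutable L HL HR"
proof -
  obtain cs where models: "\<forall>k\<in>set cs. is_model L (snd k)"
    and serial: "L = KD_D \<Longrightarrow> \<forall>ag. \<exists>k\<in>set cs. ag \<in> Rep_grp (fst k)"
    and refute_D: "\<And>K b. Box K b \<in># D \<Longrightarrow> \<exists>c. (K, c) \<in> set cs \<and> \<not> holds c b"
    and satisfy_G: "\<And>H a k. Box H a \<in># G \<Longrightarrow> k \<in> set cs \<Longrightarrow> Rep_grp H \<subseteq> Rep_grp (fst k) \<Longrightarrow>
      holds (snd k) a"
    using children_for_modal_sequent[OF K_refutable D_refutable] by blast
  define r where "r = Node {p. Atom p \<in># G} (L = KT_D) cs"
  have "is_model L r"
    unfolding r_def using models serial by (intro is_model.intros) auto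
  moreover have "holds r x"
    if x: "x \<in># G" and IH: "\<And>y. y \<in> HL \<Longrightarrow> size y < size x \<Longrightarrow> holds r y" for x
  proof -
    consider (Atom) p where "x = Atom p" | (Bot) "x = Bot" | (Box) H a where "x = Box H a"
      using omega(1) x by (cases x) auto
    then show ?thesis
    proof cases
      case (Box H a)
      have "holds r a" if "self_loop r"
        using that x IH T_saturated unfolding Box r_def by simp
      moreover have "holds (snd k) a" if "k \<in> set (children r)" "Rep_grp H \<subseteq> Rep_grp (fst k)" for k
        using that x satisfy_G unfolding Box r_def by simp
      ultimately show ?thesis
        unfolding Box by simp
    qed (use x no_Bot in \<open>simp_all add: r_def\<close>)
  qed
  moreover have "\<not> holds r x" if x: "x \<in># D" for x
  proof -
    consider (Atom) p where "x = Atom p" | (Bot) "x = Bot" | (Box) K b where "x = Box K b"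
      using omega(2) x by (cases x) auto
    then show ?thesis
    proof cases
      case (Box K b)
      then obtain c where "(K, c) \<in> set (children r)" "\<not> holds c b"
        using refute_D x unfolding r_def by auto
      then show ?thesis
        unfolding Box by force
    qed (use x no_axiom in \<open>auto simp: r_def\<close>)
  qed
  ultimately show ?thesis
    using saturated_history_truth[OF hist] unfolding refutable_def by blast
qed


lemma refutable_left_step:
  fixes G :: "('a, 'p) fm multiset"
  assumes IH: "\<And>HL' HR' G' D'.
      rank HL' HR' (G' :: ('a, 'p) fm multiset) D' < rank HL HR (add_mset x G) D \<Longrightarrow>
      finite HL' \<Longrightarrow> finite HR' \<Longrightarrow> saturated_history HL' HR' G' D' \<Longrightarrow>
      gc L G' D' \<or> refutable L HL' HR'"
    and fin: "finite HL" "finite HR" and hist: "saturated_history HL HR (add_mset x G) D"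
    and nonempty: "left_premises x \<noteq> []" and underivable: "\<not> gc L (add_mset x G) D"
  shows "refutable L HL HR"
proof -
  obtain P where P: "P \<in> set (left_premises x)"
    and underivable_P: "\<not> gc L (fst P + G) (snd P + D)"
    using underivable gc_left_rule[OF nonempty] by blast
  have "x \<in> HL"
    using hist unfolding saturated_history_def by simp
  have "set_mset (fst P) \<union> set_mset (snd P) \<subseteq> \<Union> (subformulas ` (HL \<union> HR))"
  proof
    fix y
    assume "y \<in> set_mset (fst P) \<union> set_mset (snd P)"
    then have "y \<in> subformulas x"
      using left_premises_subformulas[OF P, of y] by simp
    with \<open>x \<in> HL\<close> show "y \<in> \<Union> (subformulas ` (HL \<union> HR))"
      by blast
  qed
  moreover have "(\<Sum>y\<in>#(fst P + G) + (snd P + D). size y) < (\<Sum>y\<in>#add_mset x G + D. size y)"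
    using left_premises_size_less[OF P] by simp
  ultimately have "rank (HL \<union> set_mset (fst P)) (HR \<union> set_mset (snd P)) (fst P + G) (snd P + D)
      < rank HL HR (add_mset x G) D"
    using fin by (intro rank_less_extend) auto
  moreover have
    "saturated_history (HL \<union> set_mset (fst P)) (HR \<union> set_mset (snd P)) (fst P + G) (snd P + D)"
    using hist P by (rule saturated_history_left_step)
  ultimately have
    "gc L (fst P + G) (snd P + D) \<or> refutable L (HL \<union> set_mset (fst P)) (HR \<union> set_mset (snd P))"
    using fin by (intro IH) auto
  with underivable_P show ?thesis
    by (auto elim: refutable_mono)
qed

lemma refutable_right_step:
  fixes G :: "('a, 'p) fm multiset"
  assumes IH: "\<And>HL' HR' G' D'.
      rank HL' HR' (G' :: ('a, 'p) fm multiset) D' < rank HL HR G (add_mset x D) \<Longrightarrow>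
      finite HL' \<Longrightarrow> finite HR' \<Longrightarrow> saturated_history HL' HR' G' D' \<Longrightarrow>
      gc L G' D' \<or> refutable L HL' HR'"
    and fin: "finite HL" "finite HR" and hist: "saturated_history HL HR G (add_mset x D)"
    and nonempty: "right_premises x \<noteq> []" and underivable: "\<not> gc L G (add_mset x D)"
  shows "refutable L HL HR"
proof -
  obtain P where P: "P \<in> set (right_premises x)"
    and underivable_P: "\<not> gc L (fst P + G) (snd P + D)"
    using underivable gc_right_rule[OF nonempty] by blast
  have "x \<in> HR"
    using hist unfolding saturated_history_def by simp
  have "set_mset (fst P) \<union> set_mset (snd P) \<subseteq> \<Union> (subformulas ` (HL \<union> HR))"
  proof
    fix y
    assume "y \<in> set_mset (fst P) \<union> set_mset (snd P)"
    then have "y \<in> subformulas x"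
      using right_premises_subformulas[OF P, of y] by simp
    with \<open>x \<in> HR\<close> show "y \<in> \<Union> (subformulas ` (HL \<union> HR))"
      by blast
  qed
  moreover have "(\<Sum>y\<in>#(fst P + G) + (snd P + D). size y) < (\<Sum>y\<in>#G + add_mset x D. size y)"
    using right_premises_size_less[OF P] by simp
  ultimately have "rank (HL \<union> set_mset (fst P)) (HR \<union> set_mset (snd P)) (fst P + G) (snd P + D)
      < rank HL HR G (add_mset x D)"
    using fin by (intro rank_less_extend) auto
  moreover have
    "saturated_history (HL \<union> set_mset (fst P)) (HR \<union> set_mset (snd P)) (fst P + G) (snd P + D)"
    using hist P by (rule saturated_history_right_step)
  ultimately have
    "gc L (fst P + G) (snd P + D) \<or> refutable L (HL \<union> set_mset (fst P)) (HR \<union> set_mset (snd P))"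
    using fin by (intro IH) auto
  with underivable_P show ?thesis
    by (auto elim: refutable_mono)
qed

lemma refutable_T_step:
  fixes G :: "('a, 'p) fm multiset"
  assumes IH: "\<And>HL' HR' G' D'.
      rank HL' HR' (G' :: ('a, 'p) fm multiset) D' < rank HL HR G D \<Longrightarrow>
      finite HL' \<Longrightarrow> finite HR' \<Longrightarrow> saturated_history HL' HR' G' D' \<Longrightarrow>
      gc L G' D' \<or> refutable L HL' HR'"
    and fin: "finite HL" "finite HR" and hist: "saturated_history HL HR G D"
    and KT: "L = KT_D" and box: "Box H a \<in># G" and fresh: "a \<notin> HL" and underivable: "\<not> gc L G D"
  shows "refutable L HL HR"
proof -
  have "{a} \<union> {} \<subseteq> \<Union> (subformulas ` (HL \<union> HR))"
    using hist box unfolding saturated_history_def by force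
  then have "rank (insert a HL) HR (add_mset a G) D < rank HL HR G D"
    using rank_less_extend[of HL HR "{a}" "{}"] fin fresh by simp
  then have "gc L (add_mset a G) D \<or> refutable L (insert a HL) HR"
    using fin hist saturated_history_insert by (intro IH) auto
  moreover have "\<not> gc L (add_mset a G) D"
  proof
    assume "gc L (add_mset a G) D"
    moreover obtain G0 where G0: "G = add_mset (Box H a) G0"
      using box by (metis multi_member_split)
    ultimately have "gc L (add_mset (Box H a) (add_mset a G0)) D"
      by (simp add: add_mset_commute)
    then show False
      using underivable DT[OF KT] unfolding G0 by blast
  qed
  ultimately show ?thesis
    by (auto elim: refutable_mono)
qed

lemma refutable_modal_step:
  fixes G :: "('a::finite, 'p) fm multiset"
  assumes IH: "\<And>HL' HR' G' D'.
      rank HL' HR' (G' :: ('a, 'p) fm multiset) D' < rank HL HR G D \<Longrightarrow>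
      finite HL' \<Longrightarrow> finite HR' \<Longrightarrow> saturated_history HL' HR' G' D' \<Longrightarrow>
      gc L G' D' \<or> refutable L HL' HR'"
    and fin: "finite HL" "finite HR" and hist: "saturated_history HL HR G D"
    and omega: "\<forall>x\<in>#G. omega_ok x" "\<forall>x\<in>#D. omega_ok x"
    and T_saturated: "\<And>H a. L = KT_D \<Longrightarrow> Box H a \<in># G \<Longrightarrow> a \<in> HL"
    and underivable: "\<not> gc L G D"
  shows "refutable L HL HR"
proof -
  have G_in_HL: "set_mset G \<subseteq> HL" and D_in_HR: "set_mset D \<subseteq> HR"
    using hist unfolding saturated_history_def by auto
  have no_Bot: "Bot \<notin># G"
    using underivable by (metis BotL multi_member_split)
  have no_axiom: "Atom p \<notin># D" if "Atom p \<in># G" for p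
    using underivable that by (metis Ax multi_member_split)
  have K_refutable: "refutable L (set_mset (unboxes (\<lambda>H. Rep_grp H \<subseteq> Rep_grp K) G)) {b}"
    if b: "Box K b \<in># D" for K b
  proof -
    let ?\<Gamma> = "unboxes (\<lambda>H. Rep_grp H \<subseteq> Rep_grp K) G"
    have "\<not> gc L ?\<Gamma> {#b#}"
      using gc_DK_unboxes[OF omega(1) b omega(2)] underivable by blast
    moreover have "rank (set_mset ?\<Gamma>) {b} ?\<Gamma> {#b#} < rank HL HR G D"
      using fin b G_in_HL D_in_HR
      by (intro rank_less_restart) (force simp: in_unboxes_iff)+
    ultimately show ?thesis
      using IH saturated_history_set_mset[of ?\<Gamma> "{#b#}"] by fastforce
  qed
  have D_refutable: "refutable L (set_mset (unboxes ((=) (single_grp ag)) G)) {}"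
    if KD: "L = KD_D" and nonempty: "unboxes ((=) (single_grp ag)) G \<noteq> {#}" for ag
  proof -
    let ?\<Gamma> = "unboxes ((=) (single_grp ag)) G"
    have "\<not> gc L ?\<Gamma> {#}"
      using gc_DD_unboxes[OF KD omega nonempty] underivable by blast
    moreover have "rank (set_mset ?\<Gamma>) {} ?\<Gamma> {#} < rank HL HR G D"
      using fin nonempty G_in_HL
      by (intro rank_less_restart) (force simp: in_unboxes_iff)+
    ultimately show ?thesis
      using IH saturated_history_set_mset[of ?\<Gamma> "{#}"] by fastforce
  qed
  show ?thesis
    using hist omega no_Bot no_axiom T_saturated K_refutable D_refutable
    by (rule refutable_modal_sequent)
qed

lemma gc_or_refutable:
  fixes G :: "('a::finite, 'p) fm multiset"
  assumes "finite HL" "finite HR" "saturated_history HL HR G D"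
  shows "gc L G D \<or> refutable L HL HR"
  using assms
proof (induction "rank HL HR G D" arbitrary: HL HR G D rule: less_induct)
  case less
  show ?case
  proof (cases "gc L G D")
    case underivable: False
    consider (left) x G' where "G = add_mset x G'" "left_premises x \<noteq> []"
      | (right) x D' where "D = add_mset x D'" "right_premises x \<noteq> []"
      | (T) H a where "L = KT_D" "Box H a \<in># G" "a \<notin> HL"
      | (modal) "\<forall>x\<in>#G. omega_ok x" "\<forall>x\<in>#D. omega_ok x"
          "\<And>H a. L = KT_D \<Longrightarrow> Box H a \<in># G \<Longrightarrow> a \<in> HL"
      by (metis left_premises_eq_Nil_iff right_premises_eq_Nil_iff multi_member_split)
    then have "refutable L HL HR"
    proof cases
      case (left x G')
      show ?thesis
        using less.hyps less.prems left(2) underivable unfolding left(1)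
        by (rule refutable_left_step)
    next
      case (right x D')
      show ?thesis
        using less.hyps less.prems right(2) underivable unfolding right(1)
        by (rule refutable_right_step)
    next
      case T
      show ?thesis
        using less.hyps less.prems T underivable by (rule refutable_T_step)
    next
      case modal
      show ?thesis
        using less.hyps less.prems modal underivable by (rule refutable_modal_step)
    qed
    then show ?thesis ..
  qed simp
qed

theorem theorem3p14:
  fixes L :: logic and A :: "('a :: finite, 'p :: countable) fm"
  shows "hil L A \<longleftrightarrow> gc L {#} {#A#}"
proof
  assume "hil L A"
  have "gc L {#} {#A#} \<or> refutable L {} {A}"
    using gc_or_refutable[of "{}" "{A}" "{#}" "{#A#}"] saturated_history_set_mset[of "{#}" "{#A#}"]
    by simp
  moreover have "\<not> refutable L {} {A}"
    using hil_sound[OF \<open>hil L A\<close>] unfolding refutable_def by blast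
  ultimately show "gc L {#} {#A#}"
    by blast
next
  assume "gc L {#} {#A#}"
  then have "hil L (sequent_fm {#} {#A#})"
    by (rule hil_sequent_fm_if_gc)
  then show "hil L A"
    by (rule hil_taut_consequence1) simp
qed

end
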